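(* Let $\{X_s,\|\cdot\|_s\}_{s\in\mathbb N_0}$ be a sequence of Banach spaces satisfying (F1)–(F3) and $\{g_i\}_{i=1}^\infty\in(X_0^* )^{\mathbb N}$. Assume there is a sequence $\{f_i\}_{i=1}^\infty$ of nonzero elements of $X_F$ such that for every $s\in\mathbb N_0$ and every $f\in X_s$, $f=\sum_{i=1}^\infty g_i(f)f_i$ with convergence in $X_s$. Then there exists a sequence $\{\Theta_s\}_{s\in\mathbb N_0}$ of $CB$-spaces satisfying (F1)–(F3) such that $\{g_i|_{X_F}\}_{i=1}^\infty$ is an $F$-frame for $X_F$ with respect to $\Theta_F$, and $\{f_i\}$ is a $DF$-Bessel sequence for $X_F^*$ with respect to $\Theta_F^*$.
   Context: Conditions (F1)–(F3) for a sequence $\{Y_s,|\cdot|_s\}_{s\in\mathbb N_0}$ of separable Banach spaces: (F1) $\{0\}\neq\bigcap_sY_s\subseteq\dots\subseteq Y_1\subseteq Y_0$; (F2) $|\cdot|_0\le|\cdot|_1\le\dots$; (F3) $Y_F:=\bigcap_sY_s$ dense in each $Y_s$. $X_F=\bigcap_sX_s$, $\Theta_F=\bigcap_s\Theta_s$. $BK$-space: Banach sequence space with continuous coordinate functionals; $CB$-space: $BK$-space in which the canonical vectors $e_i$ form a Schauder basis. For a $CB$-space $\Theta$, $\Theta^*$ is identified with $\{\{g(e_i)\}:g\in\Theta^*\}$ normed by $\|g\|_{\Theta^*}$. For a Banach space $X$ and $BK$-space $\Theta$, $\{h_i\}\subset X^*$ is a $\Theta$-Bessel sequence for $X$ if $\{h_i(f)\}\in\Theta$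 and $|||\{h_i(f)\}|||\le B\|f\|$ for all $f\in X$ (applied to $\{f_i\}\subset X\subseteq X^{**}$ acting on $X^*$). $F$-frame for $X_F$ w.r.t. $\Theta_F$: $\{g_i\}\in(X_F^* )^{\mathbb N}$ with $\{g_i(f)\}\in\Theta_F$ for $f\in X_F$, constants $0<A_s\le B_s$ with $A_s\|f\|_s\le|||\{g_i(f)\}|||_s\le B_s\|f\|_s$ for all $s$ and $f\in X_F$, and an operator $V:\Theta_F\to X_F$ with $V(\{g_i(f)\})=f$ which is $F$-bounded ($\|Vc\|_s\le K_s|||c|||_s$ for each $s$). $\{f_i\}\in(X_F)^{\mathbb N}$ is a $DF$-Bessel sequence for $X_F^*$ w.r.t. $\Theta_F^*$ if it is a $\Theta_s^*$-Bessel sequence for $X_s^*$ for every $s$. *)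

theory Defs
  imports "HOL-Analysis.Analysis"
begin

text \<open>Real scalars. A Banach space is modelled as a subspace X of an ambient real
vector space together with its own norm N (only its values on X matter).\<close>

definition is_norm_on :: "'a::real_vector set \<Rightarrow> ('a \<Rightarrow> real) \<Rightarrow> bool" where
  "is_norm_on X N \<longleftrightarrow> subspace X \<and>
     (\<forall>x\<in>X. N x \<ge> 0 \<and> (N x = 0 \<longleftrightarrow> x = 0)) \<and>
     (\<forall>x\<in>X. \<forall>c. N (c *\<^sub>R x) = \<bar>c\<bar> * N x) \<and>
     (\<forall>x\<in>X. \<forall>y\<in>X. N (x + y) \<le> N x + N y)"

definition banach_on :: "'a::real_vector set \<Rightarrow> ('a \<Rightarrow> real) \<Rightarrow> bool" where
  "banach_on X N \<longleftrightarrow> is_norm_on X N \<and>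
     (\<forall>u. (\<forall>n. u n \<in> X) \<and> (\<forall>e>0. \<exists>M. \<forall>m\<ge>M. \<forall>n\<ge>M. N (u m - u n) < e)
        \<longrightarrow> (\<exists>x\<in>X. (\<lambda>n. N (u n - x)) \<longlonglongrightarrow> 0))"

definition bdd_lin_fun :: "'a::real_vector set \<Rightarrow> ('a \<Rightarrow> real) \<Rightarrow> ('a \<Rightarrow> real) \<Rightarrow> bool" where
  "bdd_lin_fun X N h \<longleftrightarrow>
     (\<forall>x\<in>X. \<forall>y\<in>X. h (x + y) = h x + h y) \<and> (\<forall>x\<in>X. \<forall>c. h (c *\<^sub>R x) = c * h x) \<and>
     (\<exists>C. \<forall>x\<in>X. \<bar>h x\<bar> \<le> C * N x)"

definition dual_norm :: "'a set \<Rightarrow> ('a \<Rightarrow> real) \<Rightarrow> ('a \<Rightarrow> real) \<Rightarrow> real" where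
  "dual_norm X N h = (SUP x\<in>{x\<in>X. N x \<le> 1}. \<bar>h x\<bar>)"

definition F_seq :: "(nat \<Rightarrow> 'a::real_vector set) \<Rightarrow> (nat \<Rightarrow> 'a \<Rightarrow> real) \<Rightarrow> bool" where
  "F_seq X N \<longleftrightarrow>
     (\<forall>s. banach_on (X s) (N s)) \<and>
     (\<Inter>s. X s) \<noteq> {0} \<and> (\<forall>s. X (Suc s) \<subseteq> X s) \<and>
     (\<forall>s. \<forall>x\<in>X (Suc s). N s x \<le> N (Suc s) x) \<and>
     (\<forall>s. \<forall>x\<in>X s. \<forall>e>0. \<exists>y\<in>(\<Inter>t. X t). N s (x - y) < e)"

definition bdd_lin_seq_fun :: "(nat \<Rightarrow> real) set \<Rightarrow> ((nat \<Rightarrow> real) \<Rightarrow> real) \<Rightarrow> ((nat \<Rightarrow> real) \<Rightarrow> real) \<Rightarrow> bool" where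
  "bdd_lin_seq_fun \<Theta> T \<phi> \<longleftrightarrow>
     (\<forall>c\<in>\<Theta>. \<forall>d\<in>\<Theta>. \<phi> (\<lambda>j. c j + d j) = \<phi> c + \<phi> d) \<and> (\<forall>c\<in>\<Theta>. \<forall>a. \<phi> (\<lambda>j. a * c j) = a * \<phi> c) \<and>
     (\<exists>C. \<forall>c\<in>\<Theta>. \<bar>\<phi> c\<bar> \<le> C * T c)"

definition unit_seq :: "nat \<Rightarrow> nat \<Rightarrow> real" where
  "unit_seq i = (\<lambda>j. if j = i then 1 else 0)"

definition seq_subspace :: "(nat \<Rightarrow> real) set \<Rightarrow> bool" where
  "seq_subspace \<Theta> \<longleftrightarrow> (\<lambda>j. 0) \<in> \<Theta> \<and>
     (\<forall>c\<in>\<Theta>. \<forall>d\<in>\<Theta>. (\<lambda>j. c j + d j) \<in> \<Theta>) \<and> (\<forall>c\<in>\<Theta>. \<forall>a. (\<lambda>j. a * c j) \<in> \<Theta>)"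

definition seq_norm_on :: "(nat \<Rightarrow> real) set \<Rightarrow> ((nat \<Rightarrow> real) \<Rightarrow> real) \<Rightarrow> bool" where
  "seq_norm_on \<Theta> T \<longleftrightarrow> seq_subspace \<Theta> \<and>
     (\<forall>c\<in>\<Theta>. T c \<ge> 0 \<and> (T c = 0 \<longleftrightarrow> c = (\<lambda>j. 0))) \<and>
     (\<forall>c\<in>\<Theta>. \<forall>a. T (\<lambda>j. a * c j) = \<bar>a\<bar> * T c) \<and>
     (\<forall>c\<in>\<Theta>. \<forall>d\<in>\<Theta>. T (\<lambda>j. c j + d j) \<le> T c + T d)"

definition BK_space :: "(nat \<Rightarrow> real) set \<Rightarrow> ((nat \<Rightarrow> real) \<Rightarrow> real) \<Rightarrow> bool" where
  "BK_space \<Theta> T \<longleftrightarrow> seq_norm_on \<Theta> T \<and>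
     (\<forall>u. (\<forall>n. u n \<in> \<Theta>) \<and> (\<forall>e>0. \<exists>M. \<forall>m\<ge>M. \<forall>n\<ge>M. T (\<lambda>j. u m j - u n j) < e)
        \<longrightarrow> (\<exists>c\<in>\<Theta>. (\<lambda>n. T (\<lambda>j. u n j - c j)) \<longlonglongrightarrow> 0)) \<and>
     (\<forall>i. \<exists>C. \<forall>c\<in>\<Theta>. \<bar>c i\<bar> \<le> C * T c)"

definition CB_space :: "(nat \<Rightarrow> real) set \<Rightarrow> ((nat \<Rightarrow> real) \<Rightarrow> real) \<Rightarrow> bool" where
  "CB_space \<Theta> T \<longleftrightarrow> BK_space \<Theta> T \<and> (\<forall>i. unit_seq i \<in> \<Theta>) \<and>
     (\<forall>c\<in>\<Theta>. \<exists>!a. (\<lambda>n. T (\<lambda>j. c j - (\<Sum>i<n. a i * unit_seq i j))) \<longlonglongrightarrow> 0)"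

text \<open>g is an F-frame for X_F = \<Inter>X s w.r.t. \<Theta>_F = \<Inter>\<Theta> s (only the values of g on X_F,
i.e. the restrictions, are used).\<close>
definition F_frame ::
  "(nat \<Rightarrow> 'a::real_vector set) \<Rightarrow> (nat \<Rightarrow> 'a \<Rightarrow> real) \<Rightarrow>
   (nat \<Rightarrow> (nat \<Rightarrow> real) set) \<Rightarrow> (nat \<Rightarrow> (nat \<Rightarrow> real) \<Rightarrow> real) \<Rightarrow> (nat \<Rightarrow> 'a \<Rightarrow> real) \<Rightarrow> bool" where
  "F_frame X N \<Theta> T g \<longleftrightarrow>
     (\<forall>i. (\<forall>x\<in>(\<Inter>s. X s). \<forall>y\<in>(\<Inter>s. X s). g i (x + y) = g i x + g i y) \<and>
          (\<forall>x\<in>(\<Inter>s. X s). \<forall>c. g i (c *\<^sub>R x) = c * g i x) \<and>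
          (\<exists>s C. \<forall>x\<in>(\<Inter>s. X s). \<bar>g i x\<bar> \<le> C * N s x)) \<and>
     (\<forall>f\<in>(\<Inter>s. X s). (\<lambda>i. g i f) \<in> (\<Inter>s. \<Theta> s)) \<and>
     (\<exists>A B. \<forall>s. 0 < A s \<and> A s \<le> B s \<and>
        (\<forall>f\<in>(\<Inter>s. X s). A s * N s f \<le> T s (\<lambda>i. g i f) \<and> T s (\<lambda>i. g i f) \<le> B s * N s f)) \<and>
     (\<exists>V. (\<forall>c\<in>(\<Inter>s. \<Theta> s). V c \<in> (\<Inter>s. X s)) \<and>
        (\<forall>c\<in>(\<Inter>s. \<Theta> s). \<forall>d\<in>(\<Inter>s. \<Theta> s). V (\<lambda>j. c j + d j) = V c + V d) \<and>
        (\<forall>c\<in>(\<Inter>s. \<Theta> s). \<forall>a. V (\<lambda>j. a * c j) = a *\<^sub>R V c) \<and>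
        (\<forall>f\<in>(\<Inter>s. X s). V (\<lambda>i. g i f) = f) \<and>
        (\<forall>s. \<exists>K. \<forall>c\<in>(\<Inter>s. \<Theta> s). N s (V c) \<le> K * T s c))"

text \<open>{f_i} is a \<Theta>^*-Bessel sequence for X^*, with \<Theta>^* identified with the sequences
(\<phi>(e_i)) for \<phi> \<in> \<Theta>^*, normed by the dual norm of \<phi>.\<close>
definition dual_Bessel ::
  "'a::real_vector set \<Rightarrow> ('a \<Rightarrow> real) \<Rightarrow> (nat \<Rightarrow> real) set \<Rightarrow> ((nat \<Rightarrow> real) \<Rightarrow> real) \<Rightarrow>
   (nat \<Rightarrow> 'a) \<Rightarrow> bool" where
  "dual_Bessel X N \<Theta> T f \<longleftrightarrow>
     (\<exists>B. \<forall>h. bdd_lin_fun X N h \<longrightarrow>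
        (\<exists>\<phi>. bdd_lin_seq_fun \<Theta> T \<phi> \<and> (\<forall>i. \<phi> (unit_seq i) = h (f i)) \<and>
             dual_norm \<Theta> T \<phi> \<le> B * dual_norm X N h))"

definition DF_Bessel ::
  "(nat \<Rightarrow> 'a::real_vector set) \<Rightarrow> (nat \<Rightarrow> 'a \<Rightarrow> real) \<Rightarrow>
   (nat \<Rightarrow> (nat \<Rightarrow> real) set) \<Rightarrow> (nat \<Rightarrow> (nat \<Rightarrow> real) \<Rightarrow> real) \<Rightarrow> (nat \<Rightarrow> 'a) \<Rightarrow> bool" where
  "DF_Bessel X N \<Theta> T f \<longleftrightarrow> (\<forall>i. f i \<in> (\<Inter>s. X s)) \<and> (\<forall>s. dual_Bessel (X s) (N s) (\<Theta> s) (T s) f)"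

end

theory Submission
  imports Defs
begin

text \<open>
  For one Banach space (X, N) and a sequence f of nonzero vectors in X, the
  coefficient space consists of all real sequences c whose series \<Sum> c i f i has Cauchy
  partial sums in X, normed by the supremum of the norms of those partial sums.  It is a
  CB-space, and summing the series is a linear contraction V (the synthesis operator) from
  it back to X.  If moreover x = \<Sum> g i x f i for every x in X, the analysis map
  x \<mapsto> (g i x) takes X into the coefficient space and is inverted by V, which gives the
  lower frame bound; the upper frame bound comes from the uniform boundedness principle.
  Every functional h on X pulls back along V to a functional on the coefficient space with
  value h (f i) at the i-th unit vector, which is the Bessel property.  Applying all this
  to each space X s of the (F1)-(F3) sequence and comparing the levels yields the theorem.
\<close>

section \<open>Abstract norms\<close>

lemma le_of_le_plus_null:
  fixes a b :: real
  assumes "\<And>n. n \<ge> M \<Longrightarrow> a \<le> b + d n" and "d \<longlonglongrightarrow> 0"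
  shows "a \<le> b"
proof -
  have "(\<lambda>n. b + d n) \<longlonglongrightarrow> b + 0" by (intro tendsto_intros assms)
  then show ?thesis
    using assms(1) by (intro LIMSEQ_le[of "\<lambda>n. a" a "\<lambda>n. b + d n" b]) auto
qed

context
  fixes X :: "'a::real_vector set" and N :: "'a \<Rightarrow> real"
  assumes norm: "is_norm_on X N"
begin

lemma norm_on_subspace: "subspace X"
  using norm unfolding is_norm_on_def by auto

lemma norm_on_closed:
  shows "0 \<in> X" and "x \<in> X \<Longrightarrow> y \<in> X \<Longrightarrow> x + y \<in> X" and "x \<in> X \<Longrightarrow> y \<in> X \<Longrightarrow> x - y \<in> X"
    and "x \<in> X \<Longrightarrow> c *\<^sub>R x \<in> X" and "(\<And>i. i \<in> I \<Longrightarrow> v i \<in> X) \<Longrightarrow> sum v I \<in> X"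
  using norm_on_subspace
  by (auto intro: subspace_0 subspace_add subspace_diff subspace_scale subspace_sum)

lemma norm_on_nonneg: "x \<in> X \<Longrightarrow> 0 \<le> N x"
  and norm_on_eq_0_iff: "x \<in> X \<Longrightarrow> N x = 0 \<longleftrightarrow> x = 0"
  and norm_on_scale: "x \<in> X \<Longrightarrow> N (c *\<^sub>R x) = \<bar>c\<bar> * N x"
  and norm_on_triangle: "x \<in> X \<Longrightarrow> y \<in> X \<Longrightarrow> N (x + y) \<le> N x + N y"
  using norm unfolding is_norm_on_def by auto

lemma norm_on_zero: "N 0 = 0"
  using norm_on_eq_0_iff norm_on_closed(1) by simp

lemma norm_on_commute: "x \<in> X \<Longrightarrow> y \<in> X \<Longrightarrow> N (x - y) = N (y - x)"
  using norm_on_scale[of "y - x" "-1"] norm_on_closed(3) by simp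

lemma norm_on_triangle_diff: "x \<in> X \<Longrightarrow> y \<in> X \<Longrightarrow> z \<in> X \<Longrightarrow> N (x - z) \<le> N (x - y) + N (y - z)"
  using norm_on_triangle[of "x - y" "y - z"] norm_on_closed(3) by simp

lemma norm_on_triangle_minus: "x \<in> X \<Longrightarrow> y \<in> X \<Longrightarrow> N (x - y) \<le> N x + N y"
  using norm_on_triangle[of x "- y"] norm_on_scale[of y "-1"] norm_on_closed(4)[of y "-1"] by simp

lemma norm_on_reverse_triangle: "x \<in> X \<Longrightarrow> y \<in> X \<Longrightarrow> N x \<le> N y + N (x - y)"
  using norm_on_triangle[of y "x - y"] norm_on_closed(3) by simp

lemma norm_on_sum: "finite I \<Longrightarrow> (\<And>i. i \<in> I \<Longrightarrow> v i \<in> X) \<Longrightarrow> N (sum v I) \<le> (\<Sum>i\<in>I. N (v i))"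
proof (induction I rule: finite_induct)
  case empty then show ?case by (simp add: norm_on_zero)
next
  case (insert a I)
  have "N (sum v (insert a I)) \<le> N (v a) + N (sum v I)"
    using insert by (auto intro: norm_on_triangle norm_on_closed(5))
  then show ?case using insert by simp
qed

lemma norm_on_limit_unique:
  assumes "x \<in> X" "y \<in> X" "\<And>n. u n \<in> X"
    and "(\<lambda>n. N (u n - x)) \<longlonglongrightarrow> 0" "(\<lambda>n. N (u n - y)) \<longlonglongrightarrow> 0"
  shows "x = y"
proof -
  have "N (x - y) \<le> 0"
  proof (rule le_of_le_plus_null[where M = 0])
    show "(\<lambda>n. N (u n - x) + N (u n - y)) \<longlonglongrightarrow> 0"
      using tendsto_add[OF assms(4,5)] by simp
    fix n
    have "N (x - y) \<le> N (x - u n) + N (u n - y)" using assms by (intro norm_on_triangle_diff)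
    then show "N (x - y) \<le> 0 + (N (u n - x) + N (u n - y))"
      using norm_on_commute[of "u n" x] assms by simp
  qed
  then show ?thesis
    using norm_on_nonneg[of "x - y"] norm_on_eq_0_iff[of "x - y"] norm_on_closed(3) assms by simp
qed

end

definition ball_sup :: "'a::real_vector set \<Rightarrow> ('a \<Rightarrow> real) \<Rightarrow> ('a \<Rightarrow> real) \<Rightarrow> real" where
  "ball_sup X N q = (SUP x\<in>{x\<in>X. N x \<le> 1}. q x)"

lemma dual_norm_eq_ball_sup: "dual_norm X N h = ball_sup X N (\<lambda>x. \<bar>h x\<bar>)"
  unfolding dual_norm_def ball_sup_def ..

context
  fixes X :: "'a::real_vector set" and N :: "'a \<Rightarrow> real" and q :: "'a \<Rightarrow> real" and L :: real
  assumes norm: "is_norm_on X N"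
    and homogeneous: "\<And>x c. x \<in> X \<Longrightarrow> q (c *\<^sub>R x) = \<bar>c\<bar> * q x"
    and dominated: "\<And>x. x \<in> X \<Longrightarrow> q x \<le> L * N x"
begin

lemma ball_sup_bdd: "bdd_above (q ` {x\<in>X. N x \<le> 1})"
proof (rule bdd_aboveI2)
  fix x assume x: "x \<in> {x\<in>X. N x \<le> 1}"
  then have "q x \<le> L * N x" "L * N x \<le> \<bar>L\<bar> * N x" "\<bar>L\<bar> * N x \<le> \<bar>L\<bar>"
    using dominated norm_on_nonneg[OF norm] by (auto intro: mult_right_mono mult_left_le)
  then show "q x \<le> \<bar>L\<bar>" by linarith
qed

lemma ball_sup_upper: "x \<in> X \<Longrightarrow> N x \<le> 1 \<Longrightarrow> q x \<le> ball_sup X N q"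
  unfolding ball_sup_def using ball_sup_bdd by (intro cSUP_upper) auto

lemma ball_sup_nonneg: "0 \<le> ball_sup X N q"
  using ball_sup_upper[of 0] homogeneous[of 0 0] norm_on_closed(1)[OF norm] norm_on_zero[OF norm]
  by simp

lemma le_ball_sup: assumes x: "x \<in> X" shows "q x \<le> ball_sup X N q * N x"
proof (cases "x = 0")
  case True then show ?thesis
    using homogeneous[of 0 0] norm_on_closed(1)[OF norm] norm_on_zero[OF norm] by simp
next
  case False
  then have Nx: "N x > 0" using norm_on_nonneg[OF norm x] norm_on_eq_0_iff[OF norm x] by auto
  have "q ((1 / N x) *\<^sub>R x) \<le> ball_sup X N q"
    using Nx norm_on_scale[OF norm x] norm_on_closed(4)[OF norm x] by (intro ball_sup_upper) auto
  then show ?thesis using homogeneous[OF x] Nx by (simp add: divide_le_eq mult.commute)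
qed

end

lemma dual_norm_bound:
  assumes norm: "is_norm_on X N" and h: "bdd_lin_fun X N h"
  shows "0 \<le> dual_norm X N h" and "x \<in> X \<Longrightarrow> \<bar>h x\<bar> \<le> dual_norm X N h * N x"
proof -
  obtain C where C: "\<And>x. x \<in> X \<Longrightarrow> \<bar>h x\<bar> \<le> C * N x" using h unfolding bdd_lin_fun_def by blast
  have "\<And>x c. x \<in> X \<Longrightarrow> \<bar>h (c *\<^sub>R x)\<bar> = \<bar>c\<bar> * \<bar>h x\<bar>"
    using h unfolding bdd_lin_fun_def by (simp add: abs_mult)
  note sup = ball_sup_nonneg[OF norm this C] le_ball_sup[OF norm this C]
  show "0 \<le> dual_norm X N h" "x \<in> X \<Longrightarrow> \<bar>h x\<bar> \<le> dual_norm X N h * N x"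
    unfolding dual_norm_eq_ball_sup using sup by auto
qed

section \<open>The uniform boundedness principle\<close>

text \<open>Sokal's lemma: a seminorm p dominated by N attains, within distance r of any x,
  a value at least (2/3) r times its unit-ball supremum.\<close>
lemma seminorm_large_nearby:
  fixes p :: "'a::real_vector \<Rightarrow> real"
  assumes norm: "is_norm_on X N"
    and subadditive: "\<And>x y. x \<in> X \<Longrightarrow> y \<in> X \<Longrightarrow> p (x + y) \<le> p x + p y"
    and homogeneous: "\<And>x c. x \<in> X \<Longrightarrow> p (c *\<^sub>R x) = \<bar>c\<bar> * p x"
    and dominated: "\<And>x. x \<in> X \<Longrightarrow> p x \<le> L * N x"
    and x: "x \<in> X" and r: "r > 0" and pos: "ball_sup X N p > 0"
  shows "\<exists>x'\<in>X. N (x' - x) \<le> r \<and> (2/3) * r * ball_sup X N p \<le> p x'"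
proof -
  note closed = norm_on_closed[OF norm]
  have "(2/3) * ball_sup X N p < (SUP x\<in>{x\<in>X. N x \<le> 1}. p x)"
    using pos unfolding ball_sup_def by simp
  moreover have "{x\<in>X. N x \<le> 1} \<noteq> {}" using closed(1) norm_on_zero[OF norm] by auto
  ultimately obtain y where y: "y \<in> X" "N y \<le> 1" "(2/3) * ball_sup X N p < p y"
    using less_cSUP_iff[OF _ ball_sup_bdd[OF norm homogeneous dominated]] by blast
  define z where "z = r *\<^sub>R y"
  have z: "z \<in> X" "N z \<le> r" "(2/3) * r * ball_sup X N p \<le> p z"
    unfolding z_def using y r closed(4) norm_on_scale[OF norm y(1)] homogeneous[OF y(1)]
    by (auto simp: mult_left_le)
  have p_minus: "p (a - b) \<le> p a + p b" if "a \<in> X" "b \<in> X" for a b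
    using subadditive[of a "- b"] homogeneous[of b "-1"] closed(4)[of b "-1"] that by simp
  have "2 * p z = p (2 *\<^sub>R z)" using homogeneous[OF z(1), of 2] by simp
  also have "\<dots> = p ((x + z) - (x - z))" by (simp add: scaleR_2)
  also have "\<dots> \<le> p (x + z) + p (x - z)" using x z closed by (intro p_minus) auto
  finally have "p z \<le> p (x + z) \<or> p z \<le> p (x - z)" by linarith
  moreover have "N ((x + z) - x) = N z" "N ((x - z) - x) = N z"
    using norm_on_scale[OF norm z(1), of "-1"] by simp_all
  moreover have "x + z \<in> X" "x - z \<in> X" using x z(1) closed by auto
  ultimately show ?thesis using z(2,3)
    by (metis (no_types, lifting) add_diff_cancel_left' order_trans)
qed

lemma banach_geometric_limit:
  assumes banach: "banach_on X N" and u: "\<And>k. u k \<in> X"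
    and increment: "\<And>k. N (u (Suc k) - u k) \<le> (1/3) ^ Suc k"
  shows "\<exists>l\<in>X. \<forall>k. N (l - u k) \<le> (1/3) ^ k / 2"
proof -
  have norm: "is_norm_on X N" using banach unfolding banach_on_def by auto
  have tail: "N (u m - u k) \<le> (1/3) ^ k / 2" if "k \<le> m" for k m
  proof -
    have "N (u m - u k) \<le> ((1/3) ^ k - (1/3) ^ m) / 2"
      using that
    proof (induction m rule: dec_induct)
      case base then show ?case using norm_on_zero[OF norm] by simp
    next
      case (step m)
      have "N (u (Suc m) - u k) \<le> N (u (Suc m) - u m) + N (u m - u k)"
        using u by (intro norm_on_triangle_diff[OF norm])
      also have "\<dots> \<le> ((1/3) ^ k - (1/3) ^ Suc m) / 2"
        using increment[of m] step.IH by simp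
      finally show ?case .
    qed
    also have "\<dots> \<le> (1/3) ^ k / 2" by (intro divide_right_mono) auto
    finally show ?thesis .
  qed
  have "\<forall>e>0. \<exists>M. \<forall>m\<ge>M. \<forall>n\<ge>M. N (u m - u n) < e"
  proof (intro allI impI)
    fix e :: real assume "e > 0"
    then obtain M where M: "(1/3::real) ^ M < e" using real_arch_pow_inv[of e "1/3"] by auto
    have "N (u m - u n) < e" if "m \<ge> M" "n \<ge> M" for m n
    proof -
      have "N (u m - u n) \<le> N (u m - u M) + N (u M - u n)"
        by (intro norm_on_triangle_diff[OF norm] u)
      also have "N (u M - u n) = N (u n - u M)" by (intro norm_on_commute[OF norm] u)
      finally
      show ?thesis using tail[OF that(1)] tail[OF that(2)] M by simp
    qed
    then show "\<exists>M. \<forall>m\<ge>M. \<forall>n\<ge>M. N (u m - u n) < e" by blast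
  qed
  then obtain l where l: "l \<in> X" "(\<lambda>n. N (u n - l)) \<longlonglongrightarrow> 0"
    using banach u unfolding banach_on_def by blast
  have "N (l - u k) \<le> (1/3) ^ k / 2" for k
  proof (rule le_of_le_plus_null[where M = k])
    fix m assume "m \<ge> k"
    have "N (l - u k) \<le> N (l - u m) + N (u m - u k)"
      by (intro norm_on_triangle_diff[OF norm] u l(1))
    also have "N (l - u m) = N (u m - l)" by (intro norm_on_commute[OF norm] u l(1))
    finally have "N (l - u k) \<le> N (u m - l) + N (u m - u k)" .
    then show "N (l - u k) \<le> (1/3) ^ k / 2 + N (u m - l)" using tail[OF \<open>m \<ge> k\<close>] by simp
  qed (rule l(2))
  then show ?thesis using l(1) by blast
qed

text \<open>Sliding humps: if the unit-ball suprema of the seminorms p (n k) exceed 4^(k+1), then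
  Sokal's lemma produces steps of size (1/3)^(k+1) whose limit l has p (n k) l growing
  like (4/3)^(k+1).\<close>
lemma sliding_hump:
  fixes p :: "nat \<Rightarrow> 'a::real_vector \<Rightarrow> real" and n :: "nat \<Rightarrow> nat"
  assumes banach: "banach_on X N"
    and subadditive: "\<And>m x y. x \<in> X \<Longrightarrow> y \<in> X \<Longrightarrow> p m (x + y) \<le> p m x + p m y"
    and homogeneous: "\<And>m x c. x \<in> X \<Longrightarrow> p m (c *\<^sub>R x) = \<bar>c\<bar> * p m x"
    and dominated: "\<And>m x. x \<in> X \<Longrightarrow> p m x \<le> L m * N x"
    and large: "\<And>k. ball_sup X N (p (n k)) > 4 ^ Suc k"
  shows "\<exists>l\<in>X. \<forall>k. (4/3) ^ Suc k / 6 \<le> p (n k) l"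
proof -
  have norm: "is_norm_on X N" using banach unfolding banach_on_def by auto
  define S where "S k = ball_sup X N (p (n k))" for k
  define r :: "nat \<Rightarrow> real" where "r k = (1/3) ^ Suc k" for k
  have "\<exists>x'\<in>X. N (x' - x) \<le> r k \<and> (2/3) * r k * S k \<le> p (n k) x'" if "x \<in> X" for k x
  proof -
    have "0 < S k" using large[of k] zero_less_power[of "4::real" "Suc k"] unfolding S_def by linarith
    moreover have "0 < r k" unfolding r_def by simp
    ultimately show ?thesis unfolding S_def
      using seminorm_large_nearby[OF norm subadditive[where m = "n k"] homogeneous[where m = "n k"]
          dominated[where m = "n k"] that] by blast
  qed
  then have "\<forall>k x. \<exists>x'. x \<in> X \<longrightarrow> x' \<in> X \<and> N (x' - x) \<le> r k \<and> (2/3) * r k * S k \<le> p (n k) x'"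
    by blast
  then obtain hump where hump: "\<And>k x. x \<in> X \<Longrightarrow> hump k x \<in> X \<and> N (hump k x - x) \<le> r k \<and>
      (2/3) * r k * S k \<le> p (n k) (hump k x)" by metis
  define u where "u = rec_nat 0 hump"
  have u_Suc: "u (Suc k) = hump k (u k)" for k unfolding u_def by simp
  have u: "u k \<in> X" for k
    by (induction k) (auto simp: u_def norm_on_closed(1)[OF norm] hump)
  have "N (u (Suc k) - u k) \<le> (1/3) ^ Suc k" for k
    using hump[OF u[of k]] by (simp add: u_Suc r_def)
  then obtain l where l: "l \<in> X" "\<And>k. N (l - u k) \<le> (1/3) ^ k / 2"
    using banach_geometric_limit[where u = u, OF banach u] by blast
  have "(4/3::real) ^ Suc k / 6 \<le> p (n k) l" for k
  proof -
    define h where "h = r k * S k"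
    have diff: "u (Suc k) - l \<in> X" using norm_on_closed(3)[OF norm u l(1)] .
    have "(2/3) * h \<le> p (n k) (u (Suc k))"
      using hump[OF u[of k], where k = k] by (simp add: u_Suc h_def mult.assoc)
    also have "\<dots> \<le> p (n k) l + p (n k) (u (Suc k) - l)"
      using subadditive[OF l(1) diff] by simp
    also have "p (n k) (u (Suc k) - l) \<le> S k * N (l - u (Suc k))"
      using le_ball_sup[OF norm homogeneous[where m = "n k"] dominated[where m = "n k"] diff] norm_on_commute[OF norm u l(1)]
      unfolding S_def by simp
    also have "\<dots> \<le> S k * (r k / 2)"
      unfolding r_def S_def by (intro mult_left_mono l(2) ball_sup_nonneg[OF norm homogeneous[where m = "n k"] dominated[where m = "n k"]])
    also have "\<dots> = h / 2" unfolding h_def by simp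
    finally have "h / 6 \<le> p (n k) l" by simp
    moreover have "(4/3) ^ Suc k / 6 \<le> h / 6"
      using large[of k] unfolding h_def r_def S_def
      by (simp add: power_divide divide_le_eq mult.commute[of _ "ball_sup _ _ _"] pos_divide_le_eq)
    ultimately show ?thesis by linarith
  qed
  then show ?thesis using l(1) by blast
qed

text \<open>Otherwise the unit-ball suprema are unbounded, and a sliding hump contradicts
  pointwise boundedness.\<close>
lemma uniform_boundedness:
  fixes p :: "nat \<Rightarrow> 'a::real_vector \<Rightarrow> real"
  assumes banach: "banach_on X N"
    and subadditive: "\<And>n x y. x \<in> X \<Longrightarrow> y \<in> X \<Longrightarrow> p n (x + y) \<le> p n x + p n y"
    and homogeneous: "\<And>n x c. x \<in> X \<Longrightarrow> p n (c *\<^sub>R x) = \<bar>c\<bar> * p n x"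
    and dominated: "\<And>n. \<exists>L. \<forall>x\<in>X. p n x \<le> L * N x"
    and pointwise: "\<And>x. x \<in> X \<Longrightarrow> \<exists>B. \<forall>n. p n x \<le> B"
  shows "\<exists>B. \<forall>n. \<forall>x\<in>X. p n x \<le> B * N x"
proof (rule ccontr)
  assume unbounded: "\<not> ?thesis"
  have norm: "is_norm_on X N" using banach unfolding banach_on_def by auto
  obtain L where L: "\<And>n x. x \<in> X \<Longrightarrow> p n x \<le> L n * N x" using dominated by metis
  have "\<exists>m. ball_sup X N (p m) > B" for B
  proof (rule ccontr)
    assume "\<not> ?thesis"
    then have "ball_sup X N (p m) \<le> max B 0" for m by (simp add: not_less le_max_iff_disj)
    then have "p m x \<le> max B 0 * N x" if "x \<in> X" for m x
      using le_ball_sup[OF norm homogeneous[where n = m] L[where n = m] that]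
        mult_right_mono[OF _ norm_on_nonneg[OF norm that], of "ball_sup X N (p m)"]
      by fastforce
    then show False using unbounded by blast
  qed
  then have "\<forall>k. \<exists>m. ball_sup X N (p m) > 4 ^ Suc k" by blast
  then obtain n :: "nat \<Rightarrow> nat" where "\<And>k. ball_sup X N (p (n k)) > 4 ^ Suc k" by metis
  then obtain l where l: "l \<in> X" "\<And>k. (4/3::real) ^ Suc k / 6 \<le> p (n k) l"
    using sliding_hump[where p = p and n = n and L = L, OF banach subadditive homogeneous L] by blast
  obtain B where B: "\<And>m. p m l \<le> B" using pointwise[OF l(1)] by blast
  obtain k where "6 * B < (4/3::real) ^ k" using real_arch_pow[of "4/3" "6 * B"] by auto
  moreover have "(4/3::real) ^ k \<le> (4/3) ^ Suc k" by (rule power_increasing) auto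
  ultimately show False using l(2)[of k] B[of "n k"] by linarith
qed

section \<open>The coefficient space of a sequence in a Banach space\<close>

definition partial_sum :: "(nat \<Rightarrow> 'a::real_vector) \<Rightarrow> (nat \<Rightarrow> real) \<Rightarrow> nat \<Rightarrow> 'a" where
  "partial_sum f c n = (\<Sum>i<n. c i *\<^sub>R f i)"

definition coef_space :: "('a::real_vector \<Rightarrow> real) \<Rightarrow> (nat \<Rightarrow> 'a) \<Rightarrow> (nat \<Rightarrow> real) set" where
  "coef_space N f = {c. \<forall>e>0. \<exists>M. \<forall>m\<ge>M. \<forall>n\<ge>M. N (partial_sum f c m - partial_sum f c n) < e}"

definition coef_norm :: "('a::real_vector \<Rightarrow> real) \<Rightarrow> (nat \<Rightarrow> 'a) \<Rightarrow> (nat \<Rightarrow> real) \<Rightarrow> real" where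
  "coef_norm N f c = (SUP n. N (partial_sum f c n))"

definition synthesis :: "'a::real_vector set \<Rightarrow> ('a \<Rightarrow> real) \<Rightarrow> (nat \<Rightarrow> 'a) \<Rightarrow> (nat \<Rightarrow> real) \<Rightarrow> 'a" where
  "synthesis X N f c = (SOME x. x \<in> X \<and> (\<lambda>n. N (partial_sum f c n - x)) \<longlonglongrightarrow> 0)"

lemma partial_sum_linear:
  shows "partial_sum f (\<lambda>j. c j + d j) n = partial_sum f c n + partial_sum f d n"
    and "partial_sum f (\<lambda>j. c j - d j) n = partial_sum f c n - partial_sum f d n"
    and "partial_sum f (\<lambda>j. a * c j) n = a *\<^sub>R partial_sum f c n"
  unfolding partial_sum_def
  by (simp_all add: scaleR_add_left scaleR_diff_left sum.distrib sum_subtractf scaleR_sum_right)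

lemma partial_sum_Suc: "partial_sum f c (Suc n) = partial_sum f c n + c n *\<^sub>R f n"
  unfolding partial_sum_def by simp

lemma partial_sum_finite_support:
  assumes "\<And>j. j \<ge> M \<Longrightarrow> c j = 0" and "n \<ge> M"
  shows "partial_sum f c n = partial_sum f c M"
  using assms(2)
proof (induction n rule: dec_induct)
  case (step n) then show ?case by (simp add: partial_sum_Suc assms(1))
qed simp

lemma truncation_eq: "(\<Sum>i<n. a i * unit_seq i j) = (if j < n then a j else (0::real))"
  by (induction n) (auto simp: unit_seq_def less_Suc_eq)

lemma partial_sum_truncation:
  "partial_sum f (\<lambda>j. if j < n then c j else 0) m = partial_sum f c (min m n)"
proof (induction m)
  case 0 then show ?case by (simp add: partial_sum_def)
next
  case (Suc m)
  then show ?case by (cases "m < n") (simp_all add: partial_sum_Suc min_def)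
qed

locale coefficient_space =
  fixes X :: "'a::real_vector set" and N :: "'a \<Rightarrow> real" and f :: "nat \<Rightarrow> 'a"
  assumes banach: "banach_on X N"
    and f_mem: "\<And>i. f i \<in> X"
    and f_nonzero: "\<And>i. f i \<noteq> 0"
begin

abbreviation "P \<equiv> partial_sum f"
abbreviation "\<Theta> \<equiv> coef_space N f"
abbreviation "T \<equiv> coef_norm N f"

lemma norm: "is_norm_on X N"
  using banach unfolding banach_on_def by auto

lemmas closed = norm_on_closed[OF norm]

lemma norm_f_pos: "N (f i) > 0"
  using norm_on_nonneg[OF norm f_mem] norm_on_eq_0_iff[OF norm f_mem] f_nonzero
  by (simp add: order_less_le)

lemma partial_sum_mem: "P c n \<in> X"
  unfolding partial_sum_def using f_mem by (intro closed(4,5))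

lemma partial_sum_norm_le: "N (P c n) \<le> (\<Sum>i<n. \<bar>c i\<bar> * N (f i))"
  unfolding partial_sum_def
  using norm_on_sum[OF norm, of "{..<n}" "\<lambda>i. c i *\<^sub>R f i"] f_mem closed(4)
    norm_on_scale[OF norm f_mem] by simp

lemma coef_space_Cauchy: "c \<in> \<Theta> \<Longrightarrow> e > 0 \<Longrightarrow> \<exists>M. \<forall>m\<ge>M. \<forall>n\<ge>M. N (P c m - P c n) < e"
  unfolding coef_space_def by auto

lemma coef_space_finite_support: assumes "\<And>j. j \<ge> M \<Longrightarrow> c j = 0" shows "c \<in> \<Theta>"
proof -
  have "N (P c m - P c n) = 0" if "m \<ge> M" "n \<ge> M" for m n
  proof -
    have "P c m = P c M" "P c n = P c M"
      using partial_sum_finite_support[where M = M and c = c and f = f, OF assms] that by blast+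
    then show ?thesis using norm_on_zero[OF norm] by (simp only: diff_self)
  qed
  then show ?thesis unfolding coef_space_def by (intro CollectI allI impI exI[of _ M]) simp
qed

text \<open>Cauchy partial sums are bounded, so the coefficient norm is a finite supremum.\<close>
lemma coef_norm_bdd: assumes "c \<in> \<Theta>" shows "bdd_above (range (\<lambda>n. N (P c n)))"
proof -
  obtain M where M: "\<forall>m\<ge>M. \<forall>n\<ge>M. N (P c m - P c n) < 1" using coef_space_Cauchy[OF assms] by force
  have "N (P c n) \<le> (\<Sum>i<M. \<bar>c i\<bar> * N (f i)) + 1" for n
  proof (cases "n \<ge> M")
    case True
    have "N (P c n) \<le> N (P c M) + N (P c n - P c M)"
      using partial_sum_mem by (intro norm_on_reverse_triangle[OF norm])
    moreover have "N (P c n - P c M) < 1" using M True by blast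
    ultimately show ?thesis using partial_sum_norm_le[of c M] by linarith
  next
    case False
    then have "(\<Sum>i<n. \<bar>c i\<bar> * N (f i)) \<le> (\<Sum>i<M. \<bar>c i\<bar> * N (f i))"
      using norm_on_nonneg[OF norm f_mem] by (intro sum_mono2) auto
    then show ?thesis using partial_sum_norm_le[of c n] by simp
  qed
  then show ?thesis by (meson bdd_aboveI2)
qed

lemma coef_norm_upper: "c \<in> \<Theta> \<Longrightarrow> N (P c n) \<le> T c"
  unfolding coef_norm_def using coef_norm_bdd by (intro cSUP_upper) auto

lemma coef_norm_least: "(\<And>n. N (P c n) \<le> b) \<Longrightarrow> T c \<le> b"
  unfolding coef_norm_def by (intro cSUP_least) auto

lemma coef_norm_nonneg: "c \<in> \<Theta> \<Longrightarrow> 0 \<le> T c"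
  using coef_norm_upper[of c 0] norm_on_zero[OF norm] by (simp add: partial_sum_def)

lemma coef_space_add: assumes "c \<in> \<Theta>" "d \<in> \<Theta>" shows "(\<lambda>j. c j + d j) \<in> \<Theta>"
  unfolding coef_space_def
proof (intro CollectI allI impI)
  fix e :: real assume e: "e > 0"
  obtain M1 where M1: "\<forall>m\<ge>M1. \<forall>n\<ge>M1. N (P c m - P c n) < e/2"
    using coef_space_Cauchy[OF assms(1), of "e/2"] e by auto
  obtain M2 where M2: "\<forall>m\<ge>M2. \<forall>n\<ge>M2. N (P d m - P d n) < e/2"
    using coef_space_Cauchy[OF assms(2), of "e/2"] e by auto
  have "N (P (\<lambda>j. c j + d j) m - P (\<lambda>j. c j + d j) n) < e" if "max M1 M2 \<le> m" "max M1 M2 \<le> n" for m n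
  proof -
    have "P (\<lambda>j. c j + d j) m - P (\<lambda>j. c j + d j) n = (P c m - P c n) + (P d m - P d n)"
      by (simp add: partial_sum_linear)
    then have "N (P (\<lambda>j. c j + d j) m - P (\<lambda>j. c j + d j) n) \<le> N (P c m - P c n) + N (P d m - P d n)"
      using partial_sum_mem closed(3) by (metis norm_on_triangle[OF norm])
    moreover have "N (P c m - P c n) < e/2" "N (P d m - P d n) < e/2" using M1 M2 that by auto
    ultimately show ?thesis by linarith
  qed
  then show "\<exists>M. \<forall>m\<ge>M. \<forall>n\<ge>M. N (P (\<lambda>j. c j + d j) m - P (\<lambda>j. c j + d j) n) < e" by blast
qed

lemma coef_space_scale: assumes "c \<in> \<Theta>" shows "(\<lambda>j. a * c j) \<in> \<Theta>"
  unfolding coef_space_def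
proof (intro CollectI allI impI)
  fix e :: real assume e: "e > 0"
  obtain M where M: "\<forall>m\<ge>M. \<forall>n\<ge>M. N (P c m - P c n) < e / (\<bar>a\<bar> + 1)"
    using coef_space_Cauchy[OF assms, of "e / (\<bar>a\<bar> + 1)"] e by force
  have "N (P (\<lambda>j. a * c j) m - P (\<lambda>j. a * c j) n) < e" if "M \<le> m" "M \<le> n" for m n
  proof -
    have "N (P (\<lambda>j. a * c j) m - P (\<lambda>j. a * c j) n) = \<bar>a\<bar> * N (P c m - P c n)"
      using norm_on_scale[OF norm closed(3)[OF partial_sum_mem partial_sum_mem]]
      by (simp add: partial_sum_linear scaleR_diff_right)
    also have "\<dots> \<le> \<bar>a\<bar> * (e / (\<bar>a\<bar> + 1))"
      using M that by (intro mult_left_mono) (auto simp: less_imp_le)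
    also have "\<dots> < e" using e by (simp add: field_simps)
    finally show ?thesis .
  qed
  then show "\<exists>M. \<forall>m\<ge>M. \<forall>n\<ge>M. N (P (\<lambda>j. a * c j) m - P (\<lambda>j. a * c j) n) < e" by blast
qed

lemma coef_space_zero: "(\<lambda>j. 0) \<in> \<Theta>"
  by (rule coef_space_finite_support[of 0]) auto

lemma coef_space_diff: assumes "c \<in> \<Theta>" "d \<in> \<Theta>" shows "(\<lambda>j. c j - d j) \<in> \<Theta>"
  using coef_space_add[OF assms(1) coef_space_scale[OF assms(2), of "-1"]] by simp

text \<open>Coordinates are continuous: the i-th term of the series is a difference of two
  partial sums, and f i \<noteq> 0.\<close>
lemma coordinate_bound: assumes "c \<in> \<Theta>" shows "\<bar>c i\<bar> \<le> (2 / N (f i)) * T c"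
proof -
  have "\<bar>c i\<bar> * N (f i) = N (P c (Suc i) - P c i)"
    using norm_on_scale[OF norm f_mem] by (simp add: partial_sum_Suc)
  also have "\<dots> \<le> N (P c (Suc i)) + N (P c i)"
    using partial_sum_mem by (intro norm_on_triangle_minus[OF norm])
  also have "\<dots> \<le> 2 * T c" using coef_norm_upper[OF assms, of "Suc i"] coef_norm_upper[OF assms, of i]
    by simp
  finally show ?thesis using norm_f_pos[of i] by (simp add: field_simps)
qed

lemma coef_norm_zero: "T (\<lambda>j. 0) = 0"
  using coef_norm_least[of "\<lambda>j. 0" 0] coef_norm_nonneg[OF coef_space_zero] norm_on_zero[OF norm]
  by (simp add: partial_sum_def)

lemma coef_norm_eq_0: assumes "c \<in> \<Theta>" "T c = 0" shows "c = (\<lambda>j. 0)"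
proof
  fix i show "c i = 0" using coordinate_bound[OF assms(1), of i] assms(2) by simp
qed

lemma coef_norm_scale: assumes "c \<in> \<Theta>" shows "T (\<lambda>j. a * c j) = \<bar>a\<bar> * T c"
proof (rule antisym)
  have eq: "N (P (\<lambda>j. a * c j) n) = \<bar>a\<bar> * N (P c n)" for n
    using norm_on_scale[OF norm partial_sum_mem] by (simp add: partial_sum_linear)
  show "T (\<lambda>j. a * c j) \<le> \<bar>a\<bar> * T c"
    by (rule coef_norm_least) (use eq coef_norm_upper[OF assms] in \<open>auto intro: mult_left_mono\<close>)
  show "\<bar>a\<bar> * T c \<le> T (\<lambda>j. a * c j)"
  proof (cases "a = 0")
    case True then show ?thesis using coef_norm_nonneg[OF coef_space_zero] by simp
  next
    case False
    have "N (P c n) \<le> T (\<lambda>j. a * c j) / \<bar>a\<bar>" for n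
      using coef_norm_upper[OF coef_space_scale[OF assms], of a n] eq[of n] False
      by (simp add: field_simps)
    then have "T c \<le> T (\<lambda>j. a * c j) / \<bar>a\<bar>" by (rule coef_norm_least)
    then show ?thesis using False by (simp add: field_simps)
  qed
qed

lemma coef_norm_triangle: assumes "c \<in> \<Theta>" "d \<in> \<Theta>" shows "T (\<lambda>j. c j + d j) \<le> T c + T d"
proof (rule coef_norm_least)
  fix n
  have "N (P (\<lambda>j. c j + d j) n) \<le> N (P c n) + N (P d n)"
    unfolding partial_sum_linear using partial_sum_mem by (intro norm_on_triangle[OF norm])
  also have "\<dots> \<le> T c + T d" using coef_norm_upper assms by (intro add_mono) auto
  finally show "N (P (\<lambda>j. c j + d j) n) \<le> T c + T d" .
qed

lemma coef_Cauchy_coordinate: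
  assumes u: "\<And>n. u n \<in> \<Theta>" and Cauchy: "\<forall>e>0. \<exists>M. \<forall>m\<ge>M. \<forall>n\<ge>M. T (\<lambda>j. u m j - u n j) < e"
  shows "Cauchy (\<lambda>n. u n i)"
proof (rule metric_CauchyI)
  fix e :: real assume e: "e > 0"
  define K where "K = 2 / N (f i)"
  have K: "K > 0" unfolding K_def using norm_f_pos by simp
  obtain M where M: "\<forall>m\<ge>M. \<forall>n\<ge>M. T (\<lambda>j. u m j - u n j) < e / K"
    using Cauchy K e by (meson divide_pos_pos)
  have "dist (u m i) (u n i) < e" if "M \<le> m" "M \<le> n" for m n
  proof -
    have "\<bar>u m i - u n i\<bar> \<le> K * T (\<lambda>j. u m j - u n j)"
      using coordinate_bound[OF coef_space_diff[OF u[of m] u[of n]], of i] unfolding K_def by simp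
    also have "\<dots> < K * (e / K)" using M that K by (intro mult_strict_left_mono) auto
    finally show ?thesis using K by (simp add: dist_real_def)
  qed
  then show "\<exists>M. \<forall>m\<ge>M. \<forall>n\<ge>M. dist (u m i) (u n i) < e" by blast
qed

lemma partial_sum_coordinatewise_limit:
  assumes "\<And>i. (\<lambda>k. u k i) \<longlonglongrightarrow> c i"
  shows "(\<lambda>k. N (P (u k) m - P c m)) \<longlonglongrightarrow> 0"
proof (rule tendsto_sandwich[of "\<lambda>k. 0" _ _ "\<lambda>k. \<Sum>i<m. \<bar>u k i - c i\<bar> * N (f i)"])
  show "\<forall>\<^sub>F k in sequentially. 0 \<le> N (P (u k) m - P c m)"
    using norm_on_nonneg[OF norm] partial_sum_mem closed(3) by auto
  show "\<forall>\<^sub>F k in sequentially. N (P (u k) m - P c m) \<le> (\<Sum>i<m. \<bar>u k i - c i\<bar> * N (f i))"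
    using partial_sum_norm_le[of "\<lambda>j. u _ j - c j" m] by (simp add: partial_sum_linear)
  have "(\<lambda>k. \<Sum>i<m. \<bar>u k i - c i\<bar> * N (f i)) \<longlonglongrightarrow> (\<Sum>i<m. \<bar>c i - c i\<bar> * N (f i))"
    by (intro tendsto_intros assms)
  then show "(\<lambda>k. \<Sum>i<m. \<bar>u k i - c i\<bar> * N (f i)) \<longlonglongrightarrow> 0" by simp
qed simp

lemma partial_sum_uniform_limit:
  assumes u: "\<And>n. u n \<in> \<Theta>" and Cauchy: "\<forall>e>0. \<exists>M. \<forall>m\<ge>M. \<forall>n\<ge>M. T (\<lambda>j. u m j - u n j) < e"
    and lim: "\<And>i. (\<lambda>k. u k i) \<longlonglongrightarrow> c i" and e: "e > 0"
  shows "\<exists>M. \<forall>n\<ge>M. \<forall>m. N (P (u n) m - P c m) \<le> e"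
proof -
  obtain M where M: "\<forall>m\<ge>M. \<forall>n\<ge>M. T (\<lambda>j. u m j - u n j) < e" using Cauchy e by blast
  have "N (P (u n) m - P c m) \<le> e" if n: "n \<ge> M" for n m
  proof (rule le_of_le_plus_null[where M = M])
    fix k assume k: "k \<ge> M"
    have "N (P (u n) m - P c m) \<le> N (P (u n) m - P (u k) m) + N (P (u k) m - P c m)"
      using partial_sum_mem by (intro norm_on_triangle_diff[OF norm])
    also have "N (P (u n) m - P (u k) m) \<le> T (\<lambda>j. u n j - u k j)"
      using coef_norm_upper[OF coef_space_diff[OF u u], of n k m] by (simp add: partial_sum_linear)
    also have "\<dots> \<le> e" using M n k by (meson less_imp_le)
    finally show "N (P (u n) m - P c m) \<le> e + N (P (u k) m - P c m)" by simp
  qed (rule partial_sum_coordinatewise_limit[OF lim])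
  then show ?thesis by blast
qed

lemma coef_space_complete:
  assumes u: "\<And>n. u n \<in> \<Theta>" and Cauchy: "\<forall>e>0. \<exists>M. \<forall>m\<ge>M. \<forall>n\<ge>M. T (\<lambda>j. u m j - u n j) < e"
  shows "\<exists>c\<in>\<Theta>. (\<lambda>n. T (\<lambda>j. u n j - c j)) \<longlonglongrightarrow> 0"
proof -
  define c where "c i = lim (\<lambda>n. u n i)" for i
  have lim: "(\<lambda>n. u n i) \<longlonglongrightarrow> c i" for i
    unfolding c_def using coef_Cauchy_coordinate[OF u Cauchy, of i]
    by (simp add: Cauchy_convergent_iff convergent_LIMSEQ_iff)
  note uniform = partial_sum_uniform_limit[OF u Cauchy lim]
  have c: "c \<in> \<Theta>" unfolding coef_space_def
  proof (intro CollectI allI impI)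
    fix e :: real assume e: "e > 0"
    obtain M where M: "\<forall>n\<ge>M. \<forall>m. N (P (u n) m - P c m) \<le> e/3" using uniform[of "e/3"] e by auto
    obtain M' where M': "\<forall>m\<ge>M'. \<forall>n\<ge>M'. N (P (u M) m - P (u M) n) < e/3"
      using coef_space_Cauchy[OF u[of M], of "e/3"] e by auto
    have "N (P c m - P c n) < e" if "M' \<le> m" "M' \<le> n" for m n
    proof -
      have "N (P c m - P c n) \<le> N (P c m - P (u M) m) + N (P (u M) m - P c n)"
        using partial_sum_mem by (intro norm_on_triangle_diff[OF norm])
      moreover have "N (P (u M) m - P c n) \<le> N (P (u M) m - P (u M) n) + N (P (u M) n - P c n)"
        using partial_sum_mem by (intro norm_on_triangle_diff[OF norm])
      moreover have "N (P c m - P (u M) m) = N (P (u M) m - P c m)"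
        using partial_sum_mem by (intro norm_on_commute[OF norm])
      moreover have "N (P (u M) m - P c m) \<le> e/3" "N (P (u M) n - P c n) \<le> e/3" using M by auto
      moreover have "N (P (u M) m - P (u M) n) < e/3" using M' that by auto
      ultimately show ?thesis by linarith
    qed
    then show "\<exists>M. \<forall>m\<ge>M. \<forall>n\<ge>M. N (P c m - P c n) < e" by blast
  qed
  have "(\<lambda>n. T (\<lambda>j. u n j - c j)) \<longlonglongrightarrow> 0"
  proof (rule LIMSEQ_I)
    fix r :: real assume r: "r > 0"
    obtain M where M: "\<forall>n\<ge>M. \<forall>m. N (P (u n) m - P c m) \<le> r/2" using uniform[of "r/2"] r by auto
    have "norm (T (\<lambda>j. u n j - c j) - 0) < r" if "n \<ge> M" for n
    proof -
      have "T (\<lambda>j. u n j - c j) \<le> r/2"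
        using M that by (intro coef_norm_least) (simp add: partial_sum_linear)
      moreover have "0 \<le> T (\<lambda>j. u n j - c j)" using coef_space_diff[OF u c] by (rule coef_norm_nonneg)
      ultimately show ?thesis using r by simp
    qed
    then show "\<exists>no. \<forall>n\<ge>no. norm (T (\<lambda>j. u n j - c j) - 0) < r" by blast
  qed
  then show ?thesis using c by blast
qed

lemma unit_seq_mem: "unit_seq i \<in> \<Theta>"
  by (rule coef_space_finite_support[of "Suc i"]) (auto simp: unit_seq_def)

lemma truncation_mem: "(\<lambda>j. \<Sum>i<n. a i * unit_seq i j) \<in> \<Theta>"
  by (rule coef_space_finite_support[of n]) (simp add: truncation_eq)

lemma truncation_converges: assumes c: "c \<in> \<Theta>"
  shows "(\<lambda>n. T (\<lambda>j. c j - (\<Sum>i<n. c i * unit_seq i j))) \<longlonglongrightarrow> 0"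
proof (rule LIMSEQ_I)
  fix r :: real assume r: "r > 0"
  obtain M where M: "\<forall>m\<ge>M. \<forall>n\<ge>M. N (P c m - P c n) < r/2"
    using coef_space_Cauchy[OF c, of "r/2"] r by auto
  have "norm (T (\<lambda>j. c j - (\<Sum>i<n. c i * unit_seq i j)) - 0) < r" if n: "n \<ge> M" for n
  proof -
    have "T (\<lambda>j. c j - (\<Sum>i<n. c i * unit_seq i j)) \<le> r/2"
    proof (rule coef_norm_least)
      fix m
      have "N (P c m - P c (min m n)) \<le> r/2"
        using M n r norm_on_zero[OF norm] by (cases "m \<le> n") (auto simp: less_imp_le min_def)
      then show "N (P (\<lambda>j. c j - (\<Sum>i<n. c i * unit_seq i j)) m) \<le> r/2"
        by (simp add: partial_sum_linear truncation_eq partial_sum_truncation)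
    qed
    moreover have "0 \<le> T (\<lambda>j. c j - (\<Sum>i<n. c i * unit_seq i j))"
      using coef_space_diff[OF c truncation_mem] by (rule coef_norm_nonneg)
    ultimately show ?thesis using r by simp
  qed
  then show "\<exists>no. \<forall>n\<ge>no. norm (T (\<lambda>j. c j - (\<Sum>i<n. c i * unit_seq i j)) - 0) < r" by blast
qed

lemma expansion_unique: assumes c: "c \<in> \<Theta>"
  and a: "(\<lambda>n. T (\<lambda>j. c j - (\<Sum>i<n. a i * unit_seq i j))) \<longlonglongrightarrow> 0"
  shows "a = c"
proof
  fix i
  define K where "K = 2 / N (f i)"
  have "\<bar>c i - a i\<bar> \<le> 0"
  proof (rule le_of_le_plus_null[where M = "Suc i"])
    show "(\<lambda>n. K * T (\<lambda>j. c j - (\<Sum>i<n. a i * unit_seq i j))) \<longlonglongrightarrow> 0"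
      using tendsto_mult[OF tendsto_const a, of K] by simp
    fix n assume n: "n \<ge> Suc i"
    have "\<bar>c i - (\<Sum>k<n. a k * unit_seq k i)\<bar> \<le> K * T (\<lambda>j. c j - (\<Sum>i<n. a i * unit_seq i j))"
      unfolding K_def using coordinate_bound[OF coef_space_diff[OF c truncation_mem], of i] by simp
    then show "\<bar>c i - a i\<bar> \<le> 0 + K * T (\<lambda>j. c j - (\<Sum>i<n. a i * unit_seq i j))"
      using n by (simp add: truncation_eq)
  qed
  then show "a i = c i" by simp
qed

theorem coef_space_CB: "CB_space \<Theta> T"
  unfolding CB_space_def BK_space_def seq_norm_on_def seq_subspace_def
proof (intro conjI ballI allI impI)
  show "(\<lambda>j. 0) \<in> \<Theta>" by (rule coef_space_zero)
  show "(\<lambda>j. c j + d j) \<in> \<Theta>" if "c \<in> \<Theta>" "d \<in> \<Theta>" for c d using that by (rule coef_space_add)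
  show "(\<lambda>j. a * c j) \<in> \<Theta>" if "c \<in> \<Theta>" for c a using that by (rule coef_space_scale)
  show "0 \<le> T c" if "c \<in> \<Theta>" for c using that by (rule coef_norm_nonneg)
  show "(T c = 0) = (c = (\<lambda>j. 0))" if "c \<in> \<Theta>" for c
    using that coef_norm_eq_0 coef_norm_zero by auto
  show "T (\<lambda>j. a * c j) = \<bar>a\<bar> * T c" if "c \<in> \<Theta>" for c a using that by (rule coef_norm_scale)
  show "T (\<lambda>j. c j + d j) \<le> T c + T d" if "c \<in> \<Theta>" "d \<in> \<Theta>" for c d
    using that by (rule coef_norm_triangle)
  show "\<exists>c\<in>\<Theta>. (\<lambda>n. T (\<lambda>j. u n j - c j)) \<longlonglongrightarrow> 0"
    if "(\<forall>n. u n \<in> \<Theta>) \<and> (\<forall>e>0. \<exists>M. \<forall>m\<ge>M. \<forall>n\<ge>M. T (\<lambda>j. u m j - u n j) < e)" for u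
    using that coef_space_complete by blast
  show "\<exists>C. \<forall>c\<in>\<Theta>. \<bar>c i\<bar> \<le> C * T c" for i using coordinate_bound by blast
  show "unit_seq i \<in> \<Theta>" for i by (rule unit_seq_mem)
  show "\<exists>!a. (\<lambda>n. T (\<lambda>j. c j - (\<Sum>i<n. a i * unit_seq i j))) \<longlonglongrightarrow> 0" if "c \<in> \<Theta>" for c
    using truncation_converges[OF that] expansion_unique[OF that] by blast
qed

lemma truncation_approximates:
  assumes "c \<in> \<Theta>" and "e > 0"
  shows "\<exists>n. T (\<lambda>j. c j - (\<Sum>i<n. c i * unit_seq i j)) < e"
proof -
  obtain n where "\<forall>m\<ge>n. norm (T (\<lambda>j. c j - (\<Sum>i<m. c i * unit_seq i j)) - 0) < e"
    using LIMSEQ_D[OF truncation_converges[OF assms(1)] assms(2)] by blast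
  then have "\<bar>T (\<lambda>j. c j - (\<Sum>i<n. c i * unit_seq i j))\<bar> < e" by auto
  then show ?thesis by (auto simp: abs_less_iff)
qed

end

context coefficient_space
begin

abbreviation "V \<equiv> synthesis X N f"

lemma synthesis_limit:
  assumes c: "c \<in> \<Theta>"
  shows "V c \<in> X" and "(\<lambda>n. N (P c n - V c)) \<longlonglongrightarrow> 0"
proof -
  have "\<exists>x\<in>X. (\<lambda>n. N (P c n - x)) \<longlonglongrightarrow> 0"
    using banach partial_sum_mem coef_space_Cauchy[OF c] unfolding banach_on_def by blast
  then have "V c \<in> X \<and> (\<lambda>n. N (P c n - V c)) \<longlonglongrightarrow> 0"
    unfolding synthesis_def by (rule someI2_bex) blast
  then show "V c \<in> X" "(\<lambda>n. N (P c n - V c)) \<longlonglongrightarrow> 0" by auto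
qed

lemma synthesis_unique:
  assumes "c \<in> \<Theta>" "x \<in> X" "(\<lambda>n. N (P c n - x)) \<longlonglongrightarrow> 0"
  shows "V c = x"
  using norm_on_limit_unique[OF norm synthesis_limit(1)[OF assms(1)] assms(2) partial_sum_mem
      synthesis_limit(2)[OF assms(1)] assms(3)] .

lemma synthesis_norm: assumes c: "c \<in> \<Theta>" shows "N (V c) \<le> T c"
proof (rule le_of_le_plus_null[where M = 0])
  fix n
  have "N (V c) \<le> N (P c n) + N (V c - P c n)"
    using partial_sum_mem synthesis_limit(1)[OF c] by (intro norm_on_reverse_triangle[OF norm])
  also have "N (V c - P c n) = N (P c n - V c)"
    using partial_sum_mem synthesis_limit(1)[OF c] by (intro norm_on_commute[OF norm])
  finally show "N (V c) \<le> T c + N (P c n - V c)" using coef_norm_upper[OF c, of n] by simp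
qed (rule synthesis_limit(2)[OF c])

text \<open>V is linear, by uniqueness of limits.\<close>
lemma synthesis_add: assumes c: "c \<in> \<Theta>" and d: "d \<in> \<Theta>"
  shows "V (\<lambda>j. c j + d j) = V c + V d"
proof (rule synthesis_unique[OF coef_space_add[OF c d]])
  note lim = synthesis_limit[OF c] synthesis_limit[OF d]
  show "V c + V d \<in> X" using lim by (intro closed(2))
  show "(\<lambda>n. N (P (\<lambda>j. c j + d j) n - (V c + V d))) \<longlonglongrightarrow> 0"
  proof (rule tendsto_sandwich[of "\<lambda>n. 0" _ _ "\<lambda>n. N (P c n - V c) + N (P d n - V d)"])
    have "N (P (\<lambda>j. c j + d j) n - (V c + V d)) \<le> N (P c n - V c) + N (P d n - V d)" for n
    proof -
      have eq: "P (\<lambda>j. c j + d j) n - (V c + V d) = (P c n - V c) + (P d n - V d)"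
        by (simp add: partial_sum_linear)
      show ?thesis
        unfolding eq by (intro norm_on_triangle[OF norm] closed(3) partial_sum_mem lim(1) lim(3))
    qed
    then show "\<forall>\<^sub>F n in sequentially. N (P (\<lambda>j. c j + d j) n - (V c + V d))
        \<le> N (P c n - V c) + N (P d n - V d)" by simp
    have "0 \<le> N (P (\<lambda>j. c j + d j) n - (V c + V d))" for n
      by (intro norm_on_nonneg[OF norm] closed(2,3) partial_sum_mem lim(1) lim(3))
    then show "\<forall>\<^sub>F n in sequentially. 0 \<le> N (P (\<lambda>j. c j + d j) n - (V c + V d))" by simp
    show "(\<lambda>n. N (P c n - V c) + N (P d n - V d)) \<longlonglongrightarrow> 0"
      using tendsto_add[OF lim(2) lim(4)] by simp
  qed simp
qed

lemma synthesis_scale: assumes c: "c \<in> \<Theta>"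
  shows "V (\<lambda>j. a * c j) = a *\<^sub>R V c"
proof (rule synthesis_unique[OF coef_space_scale[OF c]])
  note lim = synthesis_limit[OF c]
  show "a *\<^sub>R V c \<in> X" using lim by (intro closed(4))
  have "N (P (\<lambda>j. a * c j) n - a *\<^sub>R V c) = \<bar>a\<bar> * N (P c n - V c)" for n
    using norm_on_scale[OF norm closed(3)[OF partial_sum_mem lim(1)]]
    by (simp add: partial_sum_linear scaleR_diff_right)
  moreover have "(\<lambda>n. \<bar>a\<bar> * N (P c n - V c)) \<longlonglongrightarrow> 0"
    using tendsto_mult[OF tendsto_const lim(2), of "\<bar>a\<bar>"] by simp
  ultimately show "(\<lambda>n. N (P (\<lambda>j. a * c j) n - a *\<^sub>R V c)) \<longlonglongrightarrow> 0" by simp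
qed

lemma synthesis_unit: "V (unit_seq i) = f i"
proof (rule synthesis_unique[OF unit_seq_mem f_mem])
  have "P (unit_seq i) (Suc i) = f i"
    by (simp add: partial_sum_Suc) (simp add: partial_sum_def unit_seq_def)
  then have "P (unit_seq i) n = f i" if "n \<ge> Suc i" for n
    using partial_sum_finite_support[of "Suc i" "unit_seq i" n f] that by (simp add: unit_seq_def)
  then have "\<forall>\<^sub>F n in sequentially. N (P (unit_seq i) n - f i) = 0"
    using norm_on_zero[OF norm] by (intro eventually_sequentiallyI[of "Suc i"]) simp
  then show "(\<lambda>n. N (P (unit_seq i) n - f i)) \<longlonglongrightarrow> 0" by (rule tendsto_eventually)
qed

text \<open>Every functional h on X pulls back along V to a functional on \<Theta> of no larger norm,
  whose value at the i-th unit vector is h (f i): f is a \<Theta>^*-Bessel sequence for X^*.\<close>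
theorem coef_space_dual_Bessel: "dual_Bessel X N \<Theta> T f"
  unfolding dual_Bessel_def
proof (intro exI[of _ "1::real"] allI impI)
  fix h assume h: "bdd_lin_fun X N h"
  let ?D = "dual_norm X N h"
  have bound: "\<bar>h (V c)\<bar> \<le> ?D * T c" if c: "c \<in> \<Theta>" for c
  proof -
    have "\<bar>h (V c)\<bar> \<le> ?D * N (V c)" using dual_norm_bound(2)[OF norm h synthesis_limit(1)[OF c]] .
    also have "\<dots> \<le> ?D * T c"
      using synthesis_norm[OF c] dual_norm_bound(1)[OF norm h] by (rule mult_left_mono)
    finally show ?thesis .
  qed
  have linear: "bdd_lin_seq_fun \<Theta> T (\<lambda>c. h (V c))"
    unfolding bdd_lin_seq_fun_def
  proof (intro conjI ballI allI exI[of _ ?D])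
    fix c d assume "c \<in> \<Theta>" "d \<in> \<Theta>"
    then show "h (V (\<lambda>j. c j + d j)) = h (V c) + h (V d)"
      using h synthesis_add synthesis_limit(1) unfolding bdd_lin_fun_def by simp
  next
    fix c a assume "c \<in> \<Theta>"
    then show "h (V (\<lambda>j. a * c j)) = a * h (V c)"
      using h synthesis_scale synthesis_limit(1) unfolding bdd_lin_fun_def by simp
  next
    fix c assume "c \<in> \<Theta>"
    then show "\<bar>h (V c)\<bar> \<le> ?D * T c" by (rule bound)
  qed
  have "dual_norm \<Theta> T (\<lambda>c. h (V c)) \<le> ?D"
    unfolding dual_norm_def[of \<Theta> T]
  proof (rule cSUP_least)
    show "{c \<in> \<Theta>. T c \<le> 1} \<noteq> {}" using coef_space_zero coef_norm_zero by auto
    fix c assume "c \<in> {c \<in> \<Theta>. T c \<le> 1}"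
    then have "\<bar>h (V c)\<bar> \<le> ?D * T c" "?D * T c \<le> ?D"
      using bound dual_norm_bound(1)[OF norm h] by (auto intro: mult_left_le)
    then show "\<bar>h (V c)\<bar> \<le> ?D" by linarith
  qed
  then show "\<exists>\<phi>. bdd_lin_seq_fun \<Theta> T \<phi> \<and> (\<forall>i. \<phi> (unit_seq i) = h (f i)) \<and>
      dual_norm \<Theta> T \<phi> \<le> 1 * ?D"
    using linear synthesis_unit by auto
qed

end

context
  fixes X X' :: "'a::real_vector set" and N N' :: "'a \<Rightarrow> real" and f :: "nat \<Rightarrow> 'a"
  assumes large: "coefficient_space X N f" and small: "coefficient_space X' N' f"
    and subset: "X' \<subseteq> X" and norm_le: "\<And>x. x \<in> X' \<Longrightarrow> N x \<le> N' x"
begin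

interpretation large: coefficient_space X N f by (fact large)
interpretation small: coefficient_space X' N' f by (fact small)

lemma partial_sum_diff_le:
  "N (partial_sum f c m - partial_sum f d n) \<le> N' (partial_sum f c m - partial_sum f d n)"
  by (intro norm_le small.closed(3) small.partial_sum_mem)

lemma coef_space_antimono: "coef_space N' f \<subseteq> coef_space N f"
proof
  fix c assume c: "c \<in> coef_space N' f"
  show "c \<in> coef_space N f" unfolding coef_space_def
  proof (intro CollectI allI impI)
    fix e :: real assume "e > 0"
    then obtain M where M: "\<forall>m\<ge>M. \<forall>n\<ge>M. N' (partial_sum f c m - partial_sum f c n) < e"
      using small.coef_space_Cauchy[OF c] by blast
    then show "\<exists>M. \<forall>m\<ge>M. \<forall>n\<ge>M. N (partial_sum f c m - partial_sum f c n) < e"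
      using partial_sum_diff_le order_le_less_trans by blast
  qed
qed

lemma coef_norm_mono: assumes c: "c \<in> coef_space N' f" shows "coef_norm N f c \<le> coef_norm N' f c"
proof (rule large.coef_norm_least)
  fix n
  have "N (partial_sum f c n) \<le> N' (partial_sum f c n)" by (intro norm_le small.partial_sum_mem)
  also have "\<dots> \<le> coef_norm N' f c" by (rule small.coef_norm_upper[OF c])
  finally show "N (partial_sum f c n) \<le> coef_norm N' f c" .
qed

lemma synthesis_restrict: assumes c: "c \<in> coef_space N' f"
  shows "synthesis X N f c = synthesis X' N' f c"
proof (rule large.synthesis_unique)
  note lim = small.synthesis_limit[OF c]
  show "c \<in> coef_space N f" using c coef_space_antimono by blast
  show "synthesis X' N' f c \<in> X" using lim(1) subset by blast
  show "(\<lambda>n. N (partial_sum f c n - synthesis X' N' f c)) \<longlonglongrightarrow> 0"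
  proof (rule tendsto_sandwich[OF _ _ tendsto_const lim(2)])
    have "N (partial_sum f c n - synthesis X' N' f c) \<le> N' (partial_sum f c n - synthesis X' N' f c)"
      for n by (intro norm_le small.closed(3) small.partial_sum_mem lim(1))
    then show "\<forall>\<^sub>F n in sequentially. N (partial_sum f c n - synthesis X' N' f c)
        \<le> N' (partial_sum f c n - synthesis X' N' f c)" by simp
    have "0 \<le> N (partial_sum f c n - synthesis X' N' f c)" for n
      by (intro norm_on_nonneg[OF large.norm] large.closed(3) large.partial_sum_mem
          \<open>synthesis X' N' f c \<in> X\<close>)
    then show "\<forall>\<^sub>F n in sequentially. 0 \<le> N (partial_sum f c n - synthesis X' N' f c)" by simp
  qed
qed

end

section \<open>Expansions in a single Banach space\<close>

locale expansion = coefficient_space +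
  fixes g :: "nat \<Rightarrow> 'a \<Rightarrow> real"
  assumes g_linear: "\<And>i. bdd_lin_fun X N (g i)"
    and expands: "\<And>x. x \<in> X \<Longrightarrow> (\<lambda>n. N (x - (\<Sum>i<n. g i x *\<^sub>R f i))) \<longlonglongrightarrow> 0"
begin

lemma partial_sums_converge: "x \<in> X \<Longrightarrow> (\<lambda>n. N (P (\<lambda>i. g i x) n - x)) \<longlonglongrightarrow> 0"
  using expands norm_on_commute[OF norm partial_sum_mem] by (simp add: partial_sum_def)

lemma analysis_mem: assumes x: "x \<in> X" shows "(\<lambda>i. g i x) \<in> \<Theta>"
  unfolding coef_space_def
proof (intro CollectI allI impI)
  fix e :: real assume "e > 0"
  then obtain M where M: "\<forall>n\<ge>M. norm (N (P (\<lambda>i. g i x) n - x) - 0) < e/2"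
    using LIMSEQ_D[OF partial_sums_converge[OF x], of "e/2"] by auto
  have "N (P (\<lambda>i. g i x) m - P (\<lambda>i. g i x) n) < e" if "M \<le> m" "M \<le> n" for m n
  proof -
    have "N (P (\<lambda>i. g i x) m - P (\<lambda>i. g i x) n) \<le> N (P (\<lambda>i. g i x) m - x) + N (x - P (\<lambda>i. g i x) n)"
      using partial_sum_mem x by (intro norm_on_triangle_diff[OF norm])
    moreover have "N (x - P (\<lambda>i. g i x) n) = N (P (\<lambda>i. g i x) n - x)"
      using partial_sum_mem x by (intro norm_on_commute[OF norm])
    moreover have "\<bar>N (P (\<lambda>i. g i x) m - x)\<bar> < e/2" "\<bar>N (P (\<lambda>i. g i x) n - x)\<bar> < e/2"
      using M that by auto
    ultimately show ?thesis by linarith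
  qed
  then show "\<exists>M. \<forall>m\<ge>M. \<forall>n\<ge>M. N (P (\<lambda>i. g i x) m - P (\<lambda>i. g i x) n) < e" by blast
qed

lemma synthesis_analysis: "x \<in> X \<Longrightarrow> V (\<lambda>i. g i x) = x"
  using synthesis_unique[OF analysis_mem] partial_sums_converge by blast

text \<open>Lower frame bound 1, since V is a contraction.\<close>
lemma analysis_lower: "x \<in> X \<Longrightarrow> N x \<le> T (\<lambda>i. g i x)"
  using synthesis_norm[OF analysis_mem] synthesis_analysis by metis

lemma truncated_expansion_linear:
  assumes "x \<in> X" "y \<in> X"
  shows "P (\<lambda>i. g i (x + y)) n = P (\<lambda>i. g i x) n + P (\<lambda>i. g i y) n"
    and "P (\<lambda>i. g i (c *\<^sub>R x)) n = c *\<^sub>R P (\<lambda>i. g i x) n"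
  using g_linear assms unfolding bdd_lin_fun_def by (simp_all add: partial_sum_linear[symmetric])

lemma truncated_expansion_bounded: "\<exists>L. \<forall>x\<in>X. N (P (\<lambda>i. g i x) n) \<le> L * N x"
proof -
  obtain C where C: "\<And>i x. x \<in> X \<Longrightarrow> \<bar>g i x\<bar> \<le> C i * N x"
    using g_linear unfolding bdd_lin_fun_def by metis
  have "N (P (\<lambda>i. g i x) n) \<le> (\<Sum>i<n. C i * N (f i)) * N x" if x: "x \<in> X" for x
  proof -
    have "N (P (\<lambda>i. g i x) n) \<le> (\<Sum>i<n. \<bar>g i x\<bar> * N (f i))" by (rule partial_sum_norm_le)
    also have "\<dots> \<le> (\<Sum>i<n. (C i * N x) * N (f i))"
      using C[OF x] norm_on_nonneg[OF norm f_mem] by (intro sum_mono mult_right_mono) auto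
    also have "\<dots> = (\<Sum>i<n. C i * N (f i)) * N x"
      unfolding sum_distrib_right by (rule sum.cong) (simp_all add: mult_ac)
    finally show ?thesis .
  qed
  then show ?thesis by blast
qed

lemma truncated_expansion_pointwise_bounded:
  assumes x: "x \<in> X" shows "\<exists>B. \<forall>n. N (P (\<lambda>i. g i x) n) \<le> B"
proof -
  obtain K where K: "\<And>n. norm (N (P (\<lambda>i. g i x) n - x)) \<le> K"
    using convergent_imp_Bseq[OF convergentI[OF partial_sums_converge[OF x]]] by (meson BseqE)
  have "N (P (\<lambda>i. g i x) n) \<le> N x + K" for n
    using norm_on_reverse_triangle[OF norm partial_sum_mem x, of "\<lambda>i. g i x" n] K[of n] by simp
  then show ?thesis by blast
qed

text \<open>Upper frame bound, by the uniform boundedness principle applied to the seminorms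
  x \<mapsto> N (\<Sum>i<n. g i x f i).\<close>
lemma analysis_upper: "\<exists>B\<ge>1. \<forall>x\<in>X. T (\<lambda>i. g i x) \<le> B * N x"
proof -
  have "\<exists>B. \<forall>n. \<forall>x\<in>X. N (P (\<lambda>i. g i x) n) \<le> B * N x"
  proof (rule uniform_boundedness[OF banach])
    fix n x y assume "x \<in> X" "y \<in> X"
    then show "N (P (\<lambda>i. g i (x + y)) n) \<le> N (P (\<lambda>i. g i x) n) + N (P (\<lambda>i. g i y) n)"
      by (simp add: truncated_expansion_linear norm_on_triangle[OF norm partial_sum_mem partial_sum_mem])
  next
    fix n x c assume "x \<in> X"
    then show "N (P (\<lambda>i. g i (c *\<^sub>R x)) n) = \<bar>c\<bar> * N (P (\<lambda>i. g i x) n)"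
      by (simp add: truncated_expansion_linear norm_on_scale[OF norm partial_sum_mem])
  qed (fact truncated_expansion_bounded truncated_expansion_pointwise_bounded)+
  then obtain B where B: "\<And>n x. x \<in> X \<Longrightarrow> N (P (\<lambda>i. g i x) n) \<le> B * N x" by blast
  have "T (\<lambda>i. g i x) \<le> max 1 B * N x" if x: "x \<in> X" for x
  proof (rule coef_norm_least)
    fix n
    show "N (P (\<lambda>i. g i x) n) \<le> max 1 B * N x"
      using B[OF x, of n] mult_right_mono[OF max.cobounded2[of B 1] norm_on_nonneg[OF norm x]]
      by linarith
  qed
  then show ?thesis by (intro exI[of _ "max 1 B"]) auto
qed

end

section \<open>Sequences of Banach spaces satisfying (F1)-(F3)\<close>

lemma F_seq_antimono: assumes "F_seq X N" and "s \<le> t" shows "X t \<subseteq> X s"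
  using assms(2)
proof (induction t rule: dec_induct)
  case (step t) then show ?case using assms(1) unfolding F_seq_def by blast
qed simp

lemma F_seq_norm_mono: assumes "F_seq X N" and "s \<le> t" and "x \<in> X t" shows "N s x \<le> N t x"
  using assms(2,3)
proof (induction t rule: dec_induct)
  case (step t)
  then have "x \<in> X t" "N t x \<le> N (Suc t) x" using assms(1) unfolding F_seq_def by auto
  then show ?case using step.IH by linarith
qed simp

lemma bdd_lin_fun_restrict:
  assumes h: "bdd_lin_fun X N h" and sub: "X' \<subseteq> X"
    and nonneg: "\<And>x. x \<in> X' \<Longrightarrow> 0 \<le> N x" and le: "\<And>x. x \<in> X' \<Longrightarrow> N x \<le> N' x"
  shows "bdd_lin_fun X' N' h"
proof -
  obtain C where C: "\<And>x. x \<in> X \<Longrightarrow> \<bar>h x\<bar> \<le> C * N x" using h unfolding bdd_lin_fun_def by blast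
  have "\<bar>h x\<bar> \<le> \<bar>C\<bar> * N' x" if x: "x \<in> X'" for x
  proof -
    have "\<bar>h x\<bar> \<le> C * N x" using C x sub by blast
    also have "\<dots> \<le> \<bar>C\<bar> * N x" using nonneg[OF x] by (intro mult_right_mono) auto
    also have "\<dots> \<le> \<bar>C\<bar> * N' x" using le[OF x] by (intro mult_left_mono) auto
    finally show ?thesis .
  qed
  then show ?thesis using h sub unfolding bdd_lin_fun_def by blast
qed

locale F_expansion =
  fixes X :: "nat \<Rightarrow> 'a::real_vector set" and N :: "nat \<Rightarrow> 'a \<Rightarrow> real"
    and g :: "nat \<Rightarrow> 'a \<Rightarrow> real" and f :: "nat \<Rightarrow> 'a"
  assumes F_seq: "F_seq X N"
    and g_bdd: "\<And>i. bdd_lin_fun (X 0) (N 0) (g i)"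
    and f_mem: "\<And>i. f i \<in> (\<Inter>s. X s)" and f_nonzero: "\<And>i. f i \<noteq> 0"
    and expands: "\<And>s x. x \<in> X s \<Longrightarrow> (\<lambda>n. N s (x - (\<Sum>i<n. g i x *\<^sub>R f i))) \<longlonglongrightarrow> 0"
begin

abbreviation "\<Theta> s \<equiv> coef_space (N s) f"
abbreviation "T s \<equiv> coef_norm (N s) f"

lemma X_antimono: "s \<le> t \<Longrightarrow> X t \<subseteq> X s"
  by (rule F_seq_antimono[OF F_seq])

lemma N_mono: "s \<le> t \<Longrightarrow> x \<in> X t \<Longrightarrow> N s x \<le> N t x"
  by (rule F_seq_norm_mono[OF F_seq])

lemma level_coefficient_space: "coefficient_space (X s) (N s) f"
  using F_seq f_mem f_nonzero unfolding F_seq_def by unfold_locales auto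

lemma level_expansion: "expansion (X s) (N s) f g"
proof -
  have X0: "X s \<subseteq> X 0" by (rule X_antimono) simp
  have "bdd_lin_fun (X s) (N s) (g i)" for i
  proof (rule bdd_lin_fun_restrict[OF g_bdd X0])
    fix x assume "x \<in> X s"
    then show "0 \<le> N 0 x" "N 0 x \<le> N s x"
      using X0 norm_on_nonneg[OF coefficient_space.norm[OF level_coefficient_space]] N_mono by auto
  qed
  then show ?thesis
    using expands by (intro expansion.intro level_coefficient_space expansion_axioms.intro)
qed

lemma coef_space_nested: "s \<le> t \<Longrightarrow> \<Theta> t \<subseteq> \<Theta> s"
  by (intro coef_space_antimono[OF level_coefficient_space[of s] level_coefficient_space[of t]]
      X_antimono N_mono)

lemma coef_norm_nested: "s \<le> t \<Longrightarrow> c \<in> \<Theta> t \<Longrightarrow> T s c \<le> T t c"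
  by (intro coef_norm_mono[OF level_coefficient_space[of s] level_coefficient_space[of t]]
      X_antimono N_mono)

lemma unit_seq_mem_all: "unit_seq i \<in> (\<Inter>s. \<Theta> s)"
  using coefficient_space.unit_seq_mem[OF level_coefficient_space] by blast

lemma coef_space_nontrivial: "(\<Inter>s. \<Theta> s) \<noteq> {(\<lambda>j. 0)}"
proof
  assume "(\<Inter>s. \<Theta> s) = {(\<lambda>j. 0)}"
  then have "unit_seq 0 = (\<lambda>j. 0)" using unit_seq_mem_all by blast
  then have "unit_seq 0 0 = (0::real)" by simp
  then show False by (simp add: unit_seq_def)
qed

lemma coef_space_dense:
  assumes "c \<in> \<Theta> s" and "e > 0" shows "\<exists>d\<in>(\<Inter>t. \<Theta> t). T s (\<lambda>j. c j - d j) < e"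
proof -
  obtain n where n: "T s (\<lambda>j. c j - (\<Sum>i<n. c i * unit_seq i j)) < e"
    using coefficient_space.truncation_approximates[OF level_coefficient_space assms] by blast
  have "(\<lambda>j. \<Sum>i<n. c i * unit_seq i j) \<in> \<Theta> t" for t
    by (rule coefficient_space.truncation_mem[OF level_coefficient_space])
  then show ?thesis using n by (intro bexI[of _ "\<lambda>j. \<Sum>i<n. c i * unit_seq i j"]) auto
qed

lemma synthesis_level: "c \<in> \<Theta> s \<Longrightarrow> synthesis (X 0) (N 0) f c = synthesis (X s) (N s) f c"
  by (intro synthesis_restrict[OF level_coefficient_space[of 0] level_coefficient_space[of s]]
      X_antimono N_mono) simp_all

lemma frame_functionals:
  "(\<forall>x\<in>(\<Inter>s. X s). \<forall>y\<in>(\<Inter>s. X s). g i (x + y) = g i x + g i y) \<and>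
   (\<forall>x\<in>(\<Inter>s. X s). \<forall>c. g i (c *\<^sub>R x) = c * g i x) \<and>
   (\<exists>s C. \<forall>x\<in>(\<Inter>s. X s). \<bar>g i x\<bar> \<le> C * N s x)"
  using g_bdd[of i] unfolding bdd_lin_fun_def by blast

text \<open>Frame bounds at every level: 1 from below, uniform boundedness from above.\<close>
lemma frame_bounds:
  "\<exists>A B. \<forall>s. 0 < A s \<and> A s \<le> B s \<and>
     (\<forall>x\<in>(\<Inter>s. X s). A s * N s x \<le> T s (\<lambda>i. g i x) \<and> T s (\<lambda>i. g i x) \<le> B s * N s x)"
proof -
  have "\<forall>s. \<exists>B\<ge>1. \<forall>x\<in>X s. T s (\<lambda>i. g i x) \<le> B * N s x"
    using expansion.analysis_upper[OF level_expansion] by blast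
  then obtain B where B: "\<And>s. B s \<ge> 1" "\<And>s x. x \<in> X s \<Longrightarrow> T s (\<lambda>i. g i x) \<le> B s * N s x"
    by metis
  show ?thesis
    using B expansion.analysis_lower[OF level_expansion]
    by (intro exI[of _ "\<lambda>s. 1"] exI[of _ B]) auto
qed

text \<open>The level-0 synthesis operator reconstructs X_F from \<Theta>_F and is bounded at every
  level, because it agrees with that level's synthesis operator.\<close>
lemma frame_synthesis:
  "\<exists>V. (\<forall>c\<in>(\<Inter>s. \<Theta> s). V c \<in> (\<Inter>s. X s)) \<and>
     (\<forall>c\<in>(\<Inter>s. \<Theta> s). \<forall>d\<in>(\<Inter>s. \<Theta> s). V (\<lambda>j. c j + d j) = V c + V d) \<and>
     (\<forall>c\<in>(\<Inter>s. \<Theta> s). \<forall>a. V (\<lambda>j. a * c j) = a *\<^sub>R V c) \<and>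
     (\<forall>x\<in>(\<Inter>s. X s). V (\<lambda>i. g i x) = x) \<and>
     (\<forall>s. \<exists>K. \<forall>c\<in>(\<Inter>s. \<Theta> s). N s (V c) \<le> K * T s c)"
proof (intro exI[of _ "synthesis (X 0) (N 0) f"] conjI ballI allI)
  note V0_linear = coefficient_space.synthesis_add[OF level_coefficient_space[of 0]]
    coefficient_space.synthesis_scale[OF level_coefficient_space[of 0]]
  fix c assume c: "c \<in> (\<Inter>s. \<Theta> s)"
  have "synthesis (X 0) (N 0) f c \<in> X t" for t
    using c synthesis_level[of c t]
      coefficient_space.synthesis_limit(1)[OF level_coefficient_space[of t]] by auto
  then show "synthesis (X 0) (N 0) f c \<in> (\<Inter>s. X s)" by blast
  fix d a assume "d \<in> (\<Inter>s. \<Theta> s)"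
  then show "synthesis (X 0) (N 0) f (\<lambda>j. c j + d j) =
      synthesis (X 0) (N 0) f c + synthesis (X 0) (N 0) f d"
    using c V0_linear(1) by blast
  show "synthesis (X 0) (N 0) f (\<lambda>j. a * c j) = a *\<^sub>R synthesis (X 0) (N 0) f c"
    using c V0_linear(2) by blast
next
  fix x assume "x \<in> (\<Inter>s. X s)"
  then show "synthesis (X 0) (N 0) f (\<lambda>i. g i x) = x"
    using expansion.synthesis_analysis[OF level_expansion] by blast
next
  fix s
  have "N s (synthesis (X 0) (N 0) f c) \<le> 1 * T s c" if "c \<in> (\<Inter>s. \<Theta> s)" for c
    using that synthesis_level[of c s] coefficient_space.synthesis_norm[OF level_coefficient_space]
    by auto
  then show "\<exists>K. \<forall>c\<in>(\<Inter>s. \<Theta> s). N s (synthesis (X 0) (N 0) f c) \<le> K * T s c" by blast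
qed

theorem F_frame: "F_frame X N \<Theta> T g"
proof -
  have "\<forall>x\<in>(\<Inter>s. X s). (\<lambda>i. g i x) \<in> (\<Inter>s. \<Theta> s)"
    using expansion.analysis_mem[OF level_expansion] by blast
  then show ?thesis
    unfolding F_frame_def by (intro conjI allI frame_functionals frame_bounds frame_synthesis)
qed

theorem DF_Bessel: "DF_Bessel X N \<Theta> T f"
  unfolding DF_Bessel_def
  by (intro conjI allI f_mem coefficient_space.coef_space_dual_Bessel[OF level_coefficient_space])

end

theorem proposition4p1:
  fixes X :: "nat \<Rightarrow> 'a::real_vector set" and N :: "nat \<Rightarrow> 'a \<Rightarrow> real"
    and g :: "nat \<Rightarrow> 'a \<Rightarrow> real" and f :: "nat \<Rightarrow> 'a"
  assumes "F_seq X N"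
    and "\<forall>i. bdd_lin_fun (X 0) (N 0) (g i)"
    and "\<forall>i. f i \<in> (\<Inter>s. X s) \<and> f i \<noteq> 0"
    and "\<forall>s. \<forall>x\<in>X s. (\<lambda>n. N s (x - (\<Sum>i<n. g i x *\<^sub>R f i))) \<longlonglongrightarrow> 0"
  shows "\<exists>(\<Theta> :: nat \<Rightarrow> (nat \<Rightarrow> real) set) T.
           (\<forall>s. CB_space (\<Theta> s) (T s)) \<and>
           (\<Inter>s. \<Theta> s) \<noteq> {(\<lambda>j. 0)} \<and> (\<forall>s. \<Theta> (Suc s) \<subseteq> \<Theta> s) \<and>
           (\<forall>s. \<forall>c\<in>\<Theta> (Suc s). T s c \<le> T (Suc s) c) \<and>
           (\<forall>s. \<forall>c\<in>\<Theta> s. \<forall>e>0. \<exists>d\<in>(\<Inter>t. \<Theta> t). T s (\<lambda>j. c j - d j) < e) \<and>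
           F_frame X N \<Theta> T g \<and> DF_Bessel X N \<Theta> T f"
proof -
  interpret F_expansion X N g f
    using assms by unfold_locales auto
  show ?thesis
  proof (intro exI[of _ "\<lambda>s. coef_space (N s) f"] exI[of _ "\<lambda>s. coef_norm (N s) f"]
      conjI allI ballI impI)
    show "CB_space (coef_space (N s) f) (coef_norm (N s) f)" for s
      by (rule coefficient_space.coef_space_CB[OF level_coefficient_space])
    show "coef_space (N (Suc s)) f \<subseteq> coef_space (N s) f" for s by (rule coef_space_nested) simp
    show "coef_norm (N s) f c \<le> coef_norm (N (Suc s)) f c" if "c \<in> coef_space (N (Suc s)) f" for s c
      using that by (intro coef_norm_nested) simp_all
    show "(\<Inter>s. coef_space (N s) f) \<noteq> {(\<lambda>j. 0)}" by (rule coef_space_nontrivial)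
    show "\<exists>d\<in>(\<Inter>t. coef_space (N t) f). coef_norm (N s) f (\<lambda>j. c j - d j) < e"
      if "c \<in> coef_space (N s) f" "e > 0" for s c e
      using that by (rule coef_space_dense)
    show "F_frame X N (\<lambda>s. coef_space (N s) f) (\<lambda>s. coef_norm (N s) f) g" by (rule F_frame)
    show "DF_Bessel X N (\<lambda>s. coef_space (N s) f) (\<lambda>s. coef_norm (N s) f) f" by (rule DF_Bessel)
  qed
qed

end
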